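(* Let $d\in\mathbb{N}$, $G=\mathbb{Z}_{12d+4}$, $H=\{0,3d+1,6d+2,9d+3\}$ and $K=\{0,6d+2\}$. Let $a_1+H,\dots,a_{3d}+H$ be the cosets of $H$ in $G$ other than $H$ itself. Form a family $S'$ of $6d$ two-element sets as follows: for each $1\le i\le d$, split $a_i+H$ into the two cosets $a_i+K$ and $b_i+K$ of $K$, where $b_i=a_i+(3d+1)$; for each $d+1\le j\le 3d$, split $a_j+H$ into two disjoint subsets $B_j$ and $C_j$, each of the form $\{x,y\}$ with $y-x=3d+1$. Then $S'$ is a $(12d+4,6d,2,0,4d)$-DPDF and a $(12d+4,6d,2,12d-4,8d)$-EPDF in $G$.
   Context: In an additive group $G$ with identity $0$, let $G^*=G\setminus\{0\}$. For $D\subseteq G$, $\Delta(D)$ is the multiset $\{x-y:x,y\in D,x\ne y\}$; for $D_1,D_2\subseteq G$, $\Delta(D_1,D_2)$ is the multiset $\{x-y:x\in D_1,y\in D_2\}$. For a family $A=\{A_1,\dots,A_s\}$ of pairwise disjoint subsets, ${\rm Int}(A)=\bigcup_i\Delta(A_i)$ and ${\rm Ext}(A)=\bigcup_{i\ne j}\Delta(A_i,A_j)$ (multiset unions). For $|G|=v$, a $(v,s,k,\lambda,\mu)$-DPDF is a family of $s$ pairwise disjoint $k$-subsets of $G^*$ with union $S$ such that ${\rm Int}(A)$ contains each element of $S$ exactly $\lambda$ times and each element of $G\setminus(S\cup\{0\})$ exactly $\mu$ times; a $(v,s,k,\lambda,\mu)$-EPDF is defined the same way using ${\rm Ext}(A)$.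 *)

theory Defs
  imports Main
begin

text \<open>The cyclic group Z_n is modelled by the carrier {0..<n} of integers,
  with addition and subtraction taken mod n. Its identity is 0.\<close>

definition zcar :: "int \<Rightarrow> int set" where
  "zcar n = {0..<n}"

definition ztrans :: "int \<Rightarrow> int \<Rightarrow> int set \<Rightarrow> int set" where
  "ztrans n a X = (\<lambda>x. (a + x) mod n) ` X"

text \<open>Multiplicity of g in Int(A) = union of Delta(B), B in A.\<close>
definition int_mult :: "int \<Rightarrow> int set set \<Rightarrow> int \<Rightarrow> nat" where
  "int_mult n A g = (\<Sum>B\<in>A. card {(x, y). x \<in> B \<and> y \<in> B \<and> x \<noteq> y \<and> (x - y) mod n = g})"

text \<open>Multiplicity of g in Ext(A) = union of Delta(B,C), B, C distinct members of A.\<close>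
definition ext_mult :: "int \<Rightarrow> int set set \<Rightarrow> int \<Rightarrow> nat" where
  "ext_mult n A g = (\<Sum>(B, C)\<in>{(B, C). B \<in> A \<and> C \<in> A \<and> B \<noteq> C}.
                        card {(x, y). x \<in> B \<and> y \<in> C \<and> (x - y) mod n = g})"

definition pdf_family :: "int \<Rightarrow> nat \<Rightarrow> nat \<Rightarrow> int set set \<Rightarrow> bool" where
  "pdf_family n s k A \<longleftrightarrow> finite A \<and> card A = s \<and>
     (\<forall>B\<in>A. B \<subseteq> zcar n - {0} \<and> card B = k) \<and>
     (\<forall>B\<in>A. \<forall>C\<in>A. B \<noteq> C \<longrightarrow> B \<inter> C = {})"

definition DPDF :: "int \<Rightarrow> nat \<Rightarrow> nat \<Rightarrow> nat \<Rightarrow> nat \<Rightarrow> int set set \<Rightarrow> bool" where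
  "DPDF n s k lam mu A \<longleftrightarrow> pdf_family n s k A \<and>
     (\<forall>g\<in>\<Union>A. int_mult n A g = lam) \<and>
     (\<forall>g\<in>zcar n - (\<Union>A \<union> {0}). int_mult n A g = mu)"

definition EPDF :: "int \<Rightarrow> nat \<Rightarrow> nat \<Rightarrow> nat \<Rightarrow> nat \<Rightarrow> int set set \<Rightarrow> bool" where
  "EPDF n s k lam mu A \<longleftrightarrow> pdf_family n s k A \<and>
     (\<forall>g\<in>\<Union>A. ext_mult n A g = lam) \<and>
     (\<forall>g\<in>zcar n - (\<Union>A \<union> {0}). ext_mult n A g = mu)"

end

theory Submission
  imports Defs
begin

(* Put h = 3d + 1, so that G = Z_4h, H = {0, h, 2h, 3h}, and the cosets of H are the residue
   classes mod h. The 3d cosets a_i + H are distinct and nontrivial, hence they are all h - 1 = 3d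
   nontrivial classes, and the 6d blocks of S' partition G \ H. A block {x, x + c} produces the
   differences c and -c: for the 2d cosets of K, c = -c = 2h; for the 4d sets B_j, C_j, c = h and
   -c = 3h. So Int(S') contains each of h, 2h, 3h exactly 4d times and nothing else. Ext + Int
   counts the pairs (x, x - g) with both entries in G \ H; there are |G \ H| = 12d of them for
   g in H, and |G| - |H \<union> (H + g)| = 12d - 4 otherwise. *)

definition res_class :: "int \<Rightarrow> int \<Rightarrow> int \<Rightarrow> int set" where
  "res_class n h r = {x \<in> zcar n. x mod h = r}"

definition diff_pair :: "int \<Rightarrow> int \<Rightarrow> int set \<Rightarrow> bool" where
  "diff_pair n c X \<longleftrightarrow> (\<exists>x y. X = {x, y} \<and> (y - x) mod n = c)"

lemma diff_pair_card:
  assumes "diff_pair n c X" and "c \<noteq> 0"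
  shows "card X = 2"
proof -
  obtain x y where "X = {x, y}" and "(y - x) mod n = c"
    using assms(1) unfolding diff_pair_def by blast
  with assms(2) show ?thesis by (cases "x = y") auto
qed

lemma diff_pair_int_count:
  assumes "diff_pair n c X" and "0 < c" and "c < n"
  shows "card {(x, y). x \<in> X \<and> y \<in> X \<and> x \<noteq> y \<and> (x - y) mod n = g}
       = of_bool (g = c) + of_bool (g = n - c)"
proof -
  obtain x y where X: "X = {x, y}" and yx: "(y - x) mod n = c"
    using assms(1) unfolding diff_pair_def by blast
  have "x \<noteq> y" using yx assms(2) by auto
  have xy: "(x - y) mod n = n - c"
    using zmod_zminus1_eq_if[of "y - x" n] yx assms(2) by simp
  have "{(u, v). u \<in> X \<and> v \<in> X \<and> u \<noteq> v \<and> (u - v) mod n = g}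
      = (if g = n - c then {(x, y)} else {}) \<union> (if g = c then {(y, x)} else {})"
    using X xy yx \<open>x \<noteq> y\<close> by auto
  then show ?thesis using \<open>x \<noteq> y\<close> by auto
qed

lemma diff_pair_ztrans:
  assumes "0 \<le> c" and "c < n"
  shows "diff_pair n c (ztrans n a {0, c})"
proof -
  have "((a + c) mod n - a mod n) mod n = c"
    using assms by (simp add: mod_diff_eq)
  then show ?thesis unfolding diff_pair_def ztrans_def by auto
qed

lemma card_pairs_Union_disjoint:
  assumes "finite A" and "\<forall>X\<in>A. finite X"
    and disj: "\<forall>X\<in>A. \<forall>Y\<in>A. X \<noteq> Y \<longrightarrow> X \<inter> Y = {}"
  shows "card {(x, y). x \<in> \<Union>A \<and> y \<in> \<Union>A \<and> P x y}
       = (\<Sum>(X, Y)\<in>A \<times> A. card {(x, y). x \<in> X \<and> y \<in> Y \<and> P x y})"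
proof -
  define T where "T = (\<lambda>(X, Y). {(x, y). x \<in> X \<and> y \<in> Y \<and> P x y})"
  have "card {(x, y). x \<in> \<Union>A \<and> y \<in> \<Union>A \<and> P x y} = card (\<Union>p\<in>A \<times> A. T p)"
    by (rule arg_cong[where f = card]) (auto simp: T_def)
  also have "\<dots> = (\<Sum>p\<in>A \<times> A. card (T p))"
  proof (rule card_UN_disjoint)
    show "finite (A \<times> A)" using assms(1) by simp
    show "\<forall>p\<in>A \<times> A. finite (T p)"
    proof
      fix p assume "p \<in> A \<times> A"
      then obtain X Y where "p = (X, Y)" "finite X" "finite Y" using assms(2) by auto
      then show "finite (T p)"
        by (auto simp: T_def intro: finite_subset[of _ "X \<times> Y"])
    qed
    show "\<forall>p\<in>A \<times> A. \<forall>q\<in>A \<times> A. p \<noteq> q \<longrightarrow> T p \<inter> T q = {}"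
    proof (intro ballI impI)
      fix p q assume "p \<in> A \<times> A" "q \<in> A \<times> A" "p \<noteq> q"
      then obtain X Y X' Y' where p: "p = (X, Y)" and q: "q = (X', Y')"
        and "X \<in> A" "Y \<in> A" "X' \<in> A" "Y' \<in> A" and "X \<noteq> X' \<or> Y \<noteq> Y'" by auto
      then have "X \<inter> X' = {} \<or> Y \<inter> Y' = {}" using disj by blast
      then show "T p \<inter> T q = {}" using p q by (auto simp: T_def)
    qed
  qed
  finally show ?thesis by (simp add: T_def case_prod_unfold)
qed

lemma ext_mult_add_int_mult:
  assumes "finite A" and "\<forall>X\<in>A. finite X"
    and "\<forall>X\<in>A. \<forall>Y\<in>A. X \<noteq> Y \<longrightarrow> X \<inter> Y = {}" and "g \<noteq> 0"
  shows "ext_mult n A g + int_mult n A g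
       = card {(x, y). x \<in> \<Union>A \<and> y \<in> \<Union>A \<and> (x - y) mod n = g}"
proof -
  define c where "c = (\<lambda>(X, Y). card {(x, y). x \<in> X \<and> y \<in> Y \<and> (x - y) mod n = g})"
  define Off where "Off = {(X, Y). X \<in> A \<and> Y \<in> A \<and> X \<noteq> Y}"
  have AA: "A \<times> A = Off \<union> (\<lambda>X. (X, X)) ` A" "Off \<inter> (\<lambda>X. (X, X)) ` A = {}"
    by (auto simp: Off_def)
  have "card {(x, y). x \<in> \<Union>A \<and> y \<in> \<Union>A \<and> (x - y) mod n = g}
      = (\<Sum>p\<in>A \<times> A. c p)"
    unfolding c_def by (rule card_pairs_Union_disjoint[OF assms(1-3)])
  also have "\<dots> = (\<Sum>p\<in>Off. c p) + (\<Sum>p\<in>(\<lambda>X. (X, X)) ` A. c p)"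
    unfolding AA(1) using assms(1) AA(2)
    by (intro sum.union_disjoint) (auto simp: Off_def intro: finite_subset[of _ "A \<times> A"])
  also have "(\<Sum>p\<in>Off. c p) = ext_mult n A g"
    unfolding ext_mult_def Off_def c_def ..
  also have "(\<Sum>p\<in>(\<lambda>X. (X, X)) ` A. c p) = int_mult n A g"
    unfolding int_mult_def c_def using \<open>g \<noteq> 0\<close>
    by (simp add: sum.reindex inj_on_def) (intro sum.cong arg_cong[where f = card], auto)
  finally show ?thesis ..
qed

lemma card_diff_pairs_eq_card_shift:
  assumes "U \<subseteq> zcar n" and "g \<in> zcar n"
  shows "card {(x, y). x \<in> U \<and> y \<in> U \<and> (x - y) mod n = g} = card {x \<in> U. (x - g) mod n \<in> U}"
proof -
  have "bij_betw (\<lambda>x. (x, (x - g) mod n)) {x \<in> U. (x - g) mod n \<in> U}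
          {(x, y). x \<in> U \<and> y \<in> U \<and> (x - y) mod n = g}"
  proof (rule bij_betw_imageI)
    show "inj_on (\<lambda>x. (x, (x - g) mod n)) {x \<in> U. (x - g) mod n \<in> U}"
      by (simp add: inj_on_def)
    have "(x - (x - y) mod n) mod n = y" if "y \<in> U" for x y
      using that assms(1) by (auto simp: mod_diff_right_eq zcar_def)
    moreover have "(x - (x - g) mod n) mod n = g" for x
      using assms(2) by (simp add: mod_diff_right_eq zcar_def)
    ultimately show "(\<lambda>x. (x, (x - g) mod n)) ` {x \<in> U. (x - g) mod n \<in> U}
        = {(x, y). x \<in> U \<and> y \<in> U \<and> (x - y) mod n = g}"
      by (auto simp: image_iff)
  qed
  then show ?thesis by (simp add: bij_betw_same_card)
qed

lemma shift_mod_eq_iff: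
  fixes a k l h m :: int
  assumes "0 < h"
  shows "(a + k*h) mod (m*h) = (a + l*h) mod (m*h) \<longleftrightarrow> k mod m = l mod m"
proof -
  have "(a + k*h) - (a + l*h) = (k - l) * h" by (simp add: algebra_simps)
  then show ?thesis using assms by (simp add: mod_eq_dvd_iff)
qed

lemma ztrans_multiples_eq_res_class:
  assumes "0 < h"
  shows "ztrans (4*h) a {0, h, 2*h, 3*h} = res_class (4*h) h (a mod h)"
proof
  show "ztrans (4*h) a {0, h, 2*h, 3*h} \<subseteq> res_class (4*h) h (a mod h)"
    using assms by (auto simp: ztrans_def res_class_def zcar_def mod_mod_cancel)
  show "res_class (4*h) h (a mod h) \<subseteq> ztrans (4*h) a {0, h, 2*h, 3*h}"
  proof
    fix x assume "x \<in> res_class (4*h) h (a mod h)"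
    then have x: "0 \<le> x" "x < 4*h" "x mod h = a mod h" by (auto simp: res_class_def zcar_def)
    then obtain k where "x = a + k*h"
      by (metis mod_eq_dvd_iff dvd_def add.commute diff_add_cancel mult.commute)
    then have "x = (a + (k mod 4)*h) mod (4*h)"
      using x shift_mod_eq_iff[OF assms, of a k 4 "k mod 4"] by simp
    moreover have "(k mod 4)*h \<in> {0, h, 2*h, 3*h}"
    proof -
      have "k mod 4 \<in> {0..<4}" by simp
      then have "k mod 4 \<in> {0, 1, 2, 3}" by auto
      then show ?thesis by auto
    qed
    ultimately show "x \<in> ztrans (4*h) a {0, h, 2*h, 3*h}"
      unfolding ztrans_def by blast
  qed
qed

lemma inj_on_multiples_mod:
  fixes a h :: int
  assumes "0 < h"
  shows "inj_on (\<lambda>k. (a + k*h) mod (4*h)) {0, 1, 2, 3}"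
  using shift_mod_eq_iff[OF assms] by (auto simp: inj_on_def)

lemma card_ztrans_multiples:
  assumes "0 < h"
  shows "card (ztrans (4*h) a {0, h, 2*h, 3*h}) = 4"
proof -
  have "ztrans (4*h) a {0, h, 2*h, 3*h} = (\<lambda>k. (a + k*h) mod (4*h)) ` {0, 1, 2, 3}"
    by (simp add: ztrans_def)
  moreover have "card ((\<lambda>k. (a + k*h) mod (4*h)) ` {0, 1, 2, 3}) = card {0, 1, 2, 3 :: int}"
    by (rule card_image[OF inj_on_multiples_mod[OF assms]])
  ultimately show ?thesis by simp
qed

lemma res_class_zero:
  assumes "0 < h"
  shows "res_class (4*h) h 0 = {0, h, 2*h, 3*h}"
  using ztrans_multiples_eq_res_class[OF assms, of 0] assms by (simp add: ztrans_def)

lemma card_res_class: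
  assumes "0 < h" and "0 \<le> r" and "r < h"
  shows "card (res_class (4*h) h r) = 4"
proof -
  have "res_class (4*h) h r = ztrans (4*h) r {0, h, 2*h, 3*h}"
    using ztrans_multiples_eq_res_class[OF assms(1), of r] assms by simp
  then show ?thesis using card_ztrans_multiples[OF assms(1)] by simp
qed

lemma nonzero_multiple_iff:
  assumes "0 < h" and "g \<in> zcar (4*h)" and "g \<noteq> 0"
  shows "g \<in> {h, 2*h, 3*h} \<longleftrightarrow> g mod h = 0"
proof -
  have "g mod h = 0 \<longleftrightarrow> g \<in> {0, h, 2*h, 3*h}"
    using assms(2) by (simp add: res_class_zero[OF assms(1), symmetric] res_class_def)
  then show ?thesis using assms(3) by simp
qed

lemma ztrans_halves:
  assumes "0 < h"
  shows "ztrans (4*h) a {0, 2*h} \<union> ztrans (4*h) (a + h) {0, 2*h} = ztrans (4*h) a {0, h, 2*h, 3*h}"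
    and "ztrans (4*h) a {0, 2*h} \<inter> ztrans (4*h) (a + h) {0, 2*h} = {}"
proof -
  define f where "f = (\<lambda>k. (a + k*h) mod (4*h))"
  have even: "ztrans (4*h) a {0, 2*h} = f ` {0, 2}"
    and odd: "ztrans (4*h) (a + h) {0, 2*h} = f ` {1, 3}"
    and all: "ztrans (4*h) a {0, h, 2*h, 3*h} = f ` {0, 1, 2, 3}"
    by (simp_all add: f_def ztrans_def algebra_simps)
  have "inj_on f {0, 1, 2, 3}"
    unfolding f_def by (rule inj_on_multiples_mod[OF assms])
  then have "f ` ({0, 2} \<inter> {1, 3}) = f ` {0, 2} \<inter> f ` {1, 3}"
    by (rule inj_on_image_Int) auto
  moreover have "{0, 2} \<inter> {1, 3} = ({} :: int set)" by auto
  ultimately show "ztrans (4*h) a {0, 2*h} \<inter> ztrans (4*h) (a + h) {0, 2*h} = {}"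
    unfolding even odd by simp
  have "{0, 2} \<union> {1, 3} = {0, 1, 2, 3 :: int}" by auto
  then show "ztrans (4*h) a {0, 2*h} \<union> ztrans (4*h) (a + h) {0, 2*h} = ztrans (4*h) a {0, h, 2*h, 3*h}"
    unfolding even odd all image_Un[symmetric] by (rule arg_cong)
qed

lemma card_shift_outside_res_class_zero:
  assumes "0 < h"
  defines "U \<equiv> zcar (4*h) - res_class (4*h) h 0"
  shows "card {x \<in> U. (x - g) mod (4*h) \<in> U}
       = (if g mod h = 0 then 4 * nat h - 4 else 4 * nat h - 8)"
proof -
  have fin: "finite (res_class (4*h) h r)" for r
    by (auto simp: res_class_def zcar_def intro: finite_subset[of _ "{0..<4*h}"])
  have sub: "res_class (4*h) h r \<subseteq> zcar (4*h)" for r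
    by (auto simp: res_class_def)
  have card_zcar: "card (zcar (4*h)) = 4 * nat h"
    using assms(1) by (simp add: zcar_def nat_mult_distrib)
  have shift: "(x - g) mod (4*h) \<in> U \<longleftrightarrow> x mod h \<noteq> g mod h" for x
    using assms(1)
    by (simp add: U_def res_class_def zcar_def dvd_mod_iff mod_eq_dvd_iff dvd_eq_mod_eq_0[symmetric])
  have eq: "{x \<in> U. (x - g) mod (4*h) \<in> U}
      = zcar (4*h) - (res_class (4*h) h 0 \<union> res_class (4*h) h (g mod h))"
    unfolding shift by (auto simp: U_def res_class_def)
  show ?thesis
  proof (cases "g mod h = 0")
    case True
    then show ?thesis
      using eq card_Diff_subset[OF fin sub, of 0] card_zcar card_res_class[OF assms(1), of 0] assms(1) by simp
  next
    case False
    have "res_class (4*h) h 0 \<inter> res_class (4*h) h (g mod h) = {}"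
      using False by (auto simp: res_class_def)
    then have "card (res_class (4*h) h 0 \<union> res_class (4*h) h (g mod h)) = 8"
      using card_Un_disjoint[OF fin fin] assms(1)
        card_res_class[OF assms(1), of 0] card_res_class[OF assms(1), of "g mod h"]
      by simp
    then show ?thesis
      using eq False card_Diff_subset[of "res_class (4*h) h 0 \<union> res_class (4*h) h (g mod h)" "zcar (4*h)"]
        fin sub card_zcar by simp
  qed
qed

locale coset_splitting =
  fixes h :: int and d :: nat and a :: "nat \<Rightarrow> int" and B C :: "nat \<Rightarrow> int set"
  assumes h_eq: "h = 3 * int d + 1"
    and a_nontriv: "\<forall>i\<in>{1..3*d}. ztrans (4*h) (a i) {0, h, 2*h, 3*h} \<noteq> {0, h, 2*h, 3*h}"
    and a_distinct: "inj_on (\<lambda>i. ztrans (4*h) (a i) {0, h, 2*h, 3*h}) {1..3*d}"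
    and BC_split: "\<forall>j\<in>{d+1..3*d}.
          B j \<union> C j = ztrans (4*h) (a j) {0, h, 2*h, 3*h} \<and> B j \<inter> C j = {}"
    and B_form: "\<forall>j\<in>{d+1..3*d}. diff_pair (4*h) h (B j)"
    and C_form: "\<forall>j\<in>{d+1..3*d}. diff_pair (4*h) h (C j)"
begin

lemma h_pos: "0 < h"
  using h_eq by simp

lemma coset_eq: "ztrans (4*h) (a i) {0, h, 2*h, 3*h} = res_class (4*h) h (a i mod h)"
  by (rule ztrans_multiples_eq_res_class[OF h_pos])

lemma residue_range:
  assumes "i \<in> {1..3*d}"
  shows "a i mod h \<in> {1..h-1}"
proof -
  have "a i mod h \<noteq> 0"
    using a_nontriv assms coset_eq[of i] res_class_zero[OF h_pos] by auto
  moreover have "0 \<le> a i mod h" and "a i mod h < h"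
    using h_pos by simp_all
  ultimately show ?thesis by simp
qed

lemma inj_on_residue: "inj_on (\<lambda>i. a i mod h) {1..3*d}"
proof (rule inj_onI)
  fix i j assume "i \<in> {1..3*d}" "j \<in> {1..3*d}" "a i mod h = a j mod h"
  then show "i = j"
    using inj_onD[OF a_distinct] coset_eq[of i] coset_eq[of j] by simp
qed

lemma residue_image: "(\<lambda>i. a i mod h) ` {1..3*d} = {1..h-1}"
proof (rule card_subset_eq)
  show "(\<lambda>i. a i mod h) ` {1..3*d} \<subseteq> {1..h-1}"
    using residue_range by blast
  show "card ((\<lambda>i. a i mod h) ` {1..3*d}) = card {1..h-1}"
    using card_image[OF inj_on_residue] h_eq by simp
qed simp

abbreviation block_index :: "(nat \<times> bool) set" where
  "block_index \<equiv> {1..3*d} \<times> UNIV"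

definition block :: "nat \<times> bool \<Rightarrow> int set" where
  "block = (\<lambda>(i, b). if i \<le> d then ztrans (4*h) (if b then a i + h else a i) {0, 2*h}
                      else if b then C i else B i)"

definition family :: "int set set" where
  "family = block ` block_index"

lemma family_eq:
  "family = (\<Union>i\<in>{1..d}. {ztrans (4*h) (a i) {0, 2*h}, ztrans (4*h) (a i + h) {0, 2*h}})
            \<union> (\<Union>j\<in>{d+1..3*d}. {B j, C j})"
proof -
  have split: "block_index = {1..d} \<times> UNIV \<union> {d+1..3*d} \<times> (UNIV :: bool set)"
    by auto
  have pairs: "block ` (I \<times> UNIV) = (\<Union>i\<in>I. {block (i, False), block (i, True)})" for I
    by (auto simp: UNIV_bool)
  show ?thesis
    unfolding family_def split image_Un pairs
    by (intro arg_cong2[where f = "(\<union>)"] SUP_cong refl) (auto simp: block_def)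
qed

lemma block_split:
  assumes "i \<in> {1..3*d}"
  shows "block (i, False) \<union> block (i, True) = res_class (4*h) h (a i mod h)"
    and "block (i, False) \<inter> block (i, True) = {}"
  using assms ztrans_halves[OF h_pos, of "a i"] BC_split coset_eq[of i]
  by (auto simp: block_def)

lemma block_diff_pair:
  assumes "i \<in> {1..3*d}"
  shows "diff_pair (4*h) (if i \<le> d then 2*h else h) (block (i, b))"
  using assms diff_pair_ztrans[of "2*h" "4*h"] h_pos B_form C_form
  by (auto simp: block_def)

lemma block_subset_coset:
  assumes "i \<in> {1..3*d}"
  shows "block (i, b) \<subseteq> res_class (4*h) h (a i mod h)"
  using block_split(1)[OF assms] by (cases b) auto

lemma blocks_disjoint:
  assumes "p \<in> block_index" and "q \<in> block_index" and "p \<noteq> q"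
  shows "block p \<inter> block q = {}"
proof -
  obtain i b j c where p: "p = (i, b)" and q: "q = (j, c)" by (cases p, cases q)
  show ?thesis
  proof (cases "i = j")
    case True
    then show ?thesis using block_split(2)[of i] assms p q by (cases b; cases c) auto
  next
    case False
    then have "a i mod h \<noteq> a j mod h" using inj_on_residue assms p q by (auto dest: inj_onD)
    then have "res_class (4*h) h (a i mod h) \<inter> res_class (4*h) h (a j mod h) = {}"
      by (auto simp: res_class_def)
    moreover have "block p \<subseteq> res_class (4*h) h (a i mod h)" "block q \<subseteq> res_class (4*h) h (a j mod h)"
      using block_subset_coset assms p q by auto
    ultimately show ?thesis by blast
  qed
qed

lemma card_block:
  assumes "i \<in> {1..3*d}"
  shows "card (block (i, b)) = 2"
  using diff_pair_card[OF block_diff_pair[OF assms]] h_pos by simp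

lemma inj_on_block: "inj_on block block_index"
proof (rule inj_onI, rule ccontr)
  fix p q assume p: "p \<in> block_index" and q: "q \<in> block_index"
    and "block p = block q" and "p \<noteq> q"
  then have "block p = {}" using blocks_disjoint[OF p q] by simp
  moreover obtain i b where "p = (i, b)" and "i \<in> {1..3*d}" using p by auto
  ultimately show False using card_block[of i b] by simp
qed

lemma Union_family: "\<Union>family = zcar (4*h) - res_class (4*h) h 0"
proof -
  have "\<Union>family = (\<Union>i\<in>{1..3*d}. block (i, False) \<union> block (i, True))"
    unfolding family_def by (auto simp: UNIV_bool)
  also have "\<dots> = (\<Union>i\<in>{1..3*d}. res_class (4*h) h (a i mod h))"
    using block_split(1) by simp
  also have "\<dots> = (\<Union>r\<in>{1..h-1}. res_class (4*h) h r)"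
    by (simp add: residue_image[symmetric])
  also have "\<dots> = zcar (4*h) - res_class (4*h) h 0"
  proof -
    have "x mod h \<in> {1..h-1} \<longleftrightarrow> x mod h \<noteq> 0" for x
    proof -
      have "0 \<le> x mod h" "x mod h < h" using h_pos by simp_all
      then show ?thesis by auto
    qed
    then show ?thesis by (auto simp: res_class_def)
  qed
  finally show ?thesis .
qed

lemma pdf_family: "pdf_family (4*h) (6*d) 2 family"
  unfolding pdf_family_def
proof (intro conjI ballI impI)
  show "finite family" by (simp add: family_def)
  show "card family = 6*d"
    unfolding family_def using card_image[OF inj_on_block] by simp
  fix X assume X: "X \<in> family"
  then show "X \<subseteq> zcar (4*h) - {0}"
    using Union_family res_class_zero[OF h_pos] by blast
  show "card X = 2" using X card_block by (auto simp: family_def)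
  fix Y assume "Y \<in> family" and "X \<noteq> Y"
  then obtain p q where "p \<in> block_index" "q \<in> block_index" "X = block p" "Y = block q"
    using X unfolding family_def by blast
  with \<open>X \<noteq> Y\<close> show "X \<inter> Y = {}" using blocks_disjoint by blast
qed

lemma int_mult_family: "int_mult (4*h) family g = (if g \<in> {h, 2*h, 3*h} then 4*d else 0)"
proof -
  define cnt where
    "cnt p = card {(x, y). x \<in> block p \<and> y \<in> block p \<and> x \<noteq> y \<and> (x - y) mod (4*h) = g}" for p
  have cnt: "cnt (i, b) = (if i \<le> d then 2 * of_bool (g = 2*h) else of_bool (g = h) + of_bool (g = 3*h))"
    if "i \<in> {1..3*d}" for i b
    using diff_pair_int_count[OF block_diff_pair[OF that, of b]] h_pos by (auto simp: cnt_def)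
  have split: "block_index = {1..d} \<times> UNIV \<union> {d+1..3*d} \<times> UNIV"
    by auto
  have "int_mult (4*h) family g = (\<Sum>p\<in>block_index. cnt p)"
    unfolding int_mult_def family_def sum.reindex[OF inj_on_block] cnt_def comp_def ..
  also have "\<dots> = (\<Sum>p\<in>{1..d} \<times> UNIV. cnt p) + (\<Sum>p\<in>{d+1..3*d} \<times> UNIV. cnt p)"
    unfolding split by (rule sum.union_disjoint) auto
  also have "\<dots> = (\<Sum>p\<in>{1..d} \<times> (UNIV :: bool set). 2 * of_bool (g = 2*h))
      + (\<Sum>p\<in>{d+1..3*d} \<times> (UNIV :: bool set). of_bool (g = h) + of_bool (g = 3*h))"
    using cnt by (intro arg_cong2[where f = "(+)"] sum.cong) auto
  also have "\<dots> = (if g \<in> {h, 2*h, 3*h} then 4*d else 0)"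
    using h_pos by (simp add: card_cartesian_product)
  finally show ?thesis .
qed

lemma ext_mult_family:
  assumes "g \<in> zcar (4*h)" and "g \<noteq> 0"
  shows "ext_mult (4*h) family g = (if g mod h = 0 then 8*d else 12*d - 4)"
proof -
  have fam: "finite family" "\<forall>X\<in>family. finite X"
      "\<forall>X\<in>family. \<forall>Y\<in>family. X \<noteq> Y \<longrightarrow> X \<inter> Y = {}"
    using pdf_family unfolding pdf_family_def by (auto intro: card_ge_0_finite)
  have "ext_mult (4*h) family g + int_mult (4*h) family g
      = card {(x, y). x \<in> \<Union>family \<and> y \<in> \<Union>family \<and> (x - y) mod (4*h) = g}"
    using ext_mult_add_int_mult[OF fam assms(2)] .
  also have "\<dots> = card {x \<in> \<Union>family. (x - g) mod (4*h) \<in> \<Union>family}"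
    using assms(1) Union_family by (intro card_diff_pairs_eq_card_shift) auto
  also have "\<dots> = (if g mod h = 0 then 12*d else 12*d - 4)"
  proof -
    have "nat h = 3*d + 1" using h_eq by simp
    then show ?thesis
      using card_shift_outside_res_class_zero[OF h_pos, of g] unfolding Union_family by simp
  qed
  finally show ?thesis
    using int_mult_family nonzero_multiple_iff[OF h_pos assms] by auto
qed

lemma DPDF_EPDF_family:
  "DPDF (4*h) (6*d) 2 0 (4*d) family \<and> EPDF (4*h) (6*d) 2 (12*d - 4) (8*d) family"
proof -
  have on_family: "int_mult (4*h) family g = 0 \<and> ext_mult (4*h) family g = 12*d - 4"
    if "g \<in> \<Union>family" for g
  proof -
    have g: "g \<in> zcar (4*h)" "g \<noteq> 0" "g mod h \<noteq> 0"
      using that Union_family res_class_zero[OF h_pos] by (auto simp: res_class_def)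
    then show ?thesis
      using int_mult_family ext_mult_family[OF g(1,2)] nonzero_multiple_iff[OF h_pos g(1,2)] by simp
  qed
  have off_family: "int_mult (4*h) family g = 4*d \<and> ext_mult (4*h) family g = 8*d"
    if "g \<in> zcar (4*h) - (\<Union>family \<union> {0})" for g
  proof -
    have g: "g \<in> zcar (4*h)" "g \<noteq> 0" "g mod h = 0"
      using that Union_family by (auto simp: res_class_def)
    then show ?thesis
      using int_mult_family ext_mult_family[OF g(1,2)] nonzero_multiple_iff[OF h_pos g(1,2)] by simp
  qed
  show ?thesis
    unfolding DPDF_def EPDF_def using pdf_family on_family off_family by blast
qed

end

theorem mainTheorem6:
  fixes d :: nat and a :: "nat \<Rightarrow> int" and B C :: "nat \<Rightarrow> int set"
  assumes d_pos: "d \<ge> 1"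
    and a_nontriv: "\<forall>i\<in>{1..3*d}.
          ztrans (12*int d+4) (a i) {0, 3*int d+1, 6*int d+2, 9*int d+3}
            \<noteq> {0, 3*int d+1, 6*int d+2, 9*int d+3}"
    and a_distinct: "inj_on (\<lambda>i. ztrans (12*int d+4) (a i) {0, 3*int d+1, 6*int d+2, 9*int d+3}) {1..3*d}"
    and BC_split: "\<forall>j\<in>{d+1..3*d}.
          B j \<union> C j = ztrans (12*int d+4) (a j) {0, 3*int d+1, 6*int d+2, 9*int d+3} \<and>
          B j \<inter> C j = {}"
    and B_form: "\<forall>j\<in>{d+1..3*d}. \<exists>x y. B j = {x, y} \<and> (y - x) mod (12*int d+4) = 3*int d+1"
    and C_form: "\<forall>j\<in>{d+1..3*d}. \<exists>x y. C j = {x, y} \<and> (y - x) mod (12*int d+4) = 3*int d+1"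
  shows "DPDF (12*int d+4) (6*d) 2 0 (4*d)
           ((\<Union>i\<in>{1..d}. {ztrans (12*int d+4) (a i) {0, 6*int d+2},
                            ztrans (12*int d+4) (a i + (3*int d+1)) {0, 6*int d+2}})
            \<union> (\<Union>j\<in>{d+1..3*d}. {B j, C j}))
       \<and> EPDF (12*int d+4) (6*d) 2 (12*d-4) (8*d)
           ((\<Union>i\<in>{1..d}. {ztrans (12*int d+4) (a i) {0, 6*int d+2},
                            ztrans (12*int d+4) (a i + (3*int d+1)) {0, 6*int d+2}})
            \<union> (\<Union>j\<in>{d+1..3*d}. {B j, C j}))"
proof -
  define h where "h = 3 * int d + 1"
  have h_multiples: "12*int d+4 = 4*h" "6*int d+2 = 2*h" "9*int d+3 = 3*h" "3*int d+1 = h"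
    by (simp_all add: h_def)
  have "coset_splitting h d a B C"
    unfolding coset_splitting_def diff_pair_def
    using h_def a_nontriv[unfolded h_multiples] a_distinct[unfolded h_multiples]
      BC_split[unfolded h_multiples] B_form[unfolded h_multiples] C_form[unfolded h_multiples]
    by blast
  then interpret coset_splitting h d a B C .
  show ?thesis
    using DPDF_EPDF_family unfolding family_eq h_multiples .
qed

end
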